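(* Let $K$ be a real compact nc convex set. Then the real operator system $A(K)$ has trivial involution ($f^*=f$ for all $f\in A(K)$) if and only if $K$ is symmetric. Equivalently, a real operator system $V$ has trivial involution if and only if $\varphi(v)^{\mathsf T}=\varphi(v)$ for every $n$, every $\varphi\in\mathrm{UCP}(V,M_n(\mathbb{R}))$ and every $v\in V$.
   Context: A real compact nc convex set $K$ over a real dual operator space $E$ is a graded set $K=\bigsqcup_nK_n$, $K_n\subseteq M_n(E)$ weak$^*$ compact, closed under direct sums $\sum\alpha_ix_i\alpha_i^{\mathsf T}$ and compressions $\beta^{\mathsf T}x\beta$ by real isometries. $K$ is called symmetric if every $k=[k_{ij}]\in K_n$ satisfies $k^{\mathsf T}=k$, i.e. $k_{ji}=k_{ij}$ for all $i,j$. $A(K)$ is the real operator system of continuous nc affine maps $K\to\bigsqcup_nM_n(\mathbb{R})$ with involution $f^*(k)=f(k)^{\mathsf T}$, cones $M_n(A(K))^+=\{[f_{ij}]:[f_{ij}(k)]\ge0\ \forall k\}$ and unit the constant $1$. Every real compact nc convex set $K$ is nc affinely homeomorphic to $\mathrm{ncS}(A(K))=\bigsqcup_n\mathrm{UCP}(A(K),M_n(\mathbb{R}))$ via $k\mapsto(f\mapsto f(k))$. *)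

theory Defs
  imports "HOL-Analysis.Analysis"
begin

text \<open>An m x n matrix with entries in 'a is a function nat => nat => 'a vanishing
  outside the index box {0..<m} x {0..<n}.\<close>

definition mat_sz :: "nat \<Rightarrow> nat \<Rightarrow> (nat \<Rightarrow> nat \<Rightarrow> 'a::zero) set" where
  "mat_sz m n = {X. \<forall>i j. (m \<le> i \<or> n \<le> j) \<longrightarrow> X i j = 0}"

definition mtr :: "(nat \<Rightarrow> nat \<Rightarrow> 'a) \<Rightarrow> (nat \<Rightarrow> nat \<Rightarrow> 'a)" where
  "mtr X = (\<lambda>i j. X j i)"

definition id_mat :: "nat \<Rightarrow> (nat \<Rightarrow> nat \<Rightarrow> real)" where
  "id_mat n = (\<lambda>i j. if i < n \<and> j = i then 1 else 0)"

definition real_isometry :: "nat \<Rightarrow> nat \<Rightarrow> (nat \<Rightarrow> nat \<Rightarrow> real) \<Rightarrow> bool" where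
  "real_isometry n m \<beta> \<longleftrightarrow> \<beta> \<in> mat_sz n m \<and>
     (\<forall>j<m. \<forall>k<m. (\<Sum>i<n. \<beta> i j * \<beta> i k) = (if j = k then 1 else 0))"

definition mconj :: "nat \<Rightarrow> nat \<Rightarrow> (nat \<Rightarrow> nat \<Rightarrow> real) \<Rightarrow> (nat \<Rightarrow> nat \<Rightarrow> 'a::real_vector)
    \<Rightarrow> (nat \<Rightarrow> nat \<Rightarrow> 'a)" where
  "mconj n p \<alpha> X = (\<lambda>i j. if i < n \<and> j < n
      then (\<Sum>c<p. \<Sum>d<p. (\<alpha> i c * \<alpha> j d) *\<^sub>R X c d) else 0)"

definition msum :: "nat \<Rightarrow> (nat \<Rightarrow> nat \<Rightarrow> nat \<Rightarrow> 'a::comm_monoid_add) \<Rightarrow> (nat \<Rightarrow> nat \<Rightarrow> 'a)" where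
  "msum p M = (\<lambda>i j. \<Sum>k<p. M k i j)"

text \<open>E is the dual of a real Banach space F (the predual operator space); elements of
  M_n(E) are zero-padded matrices of bounded functionals on F.\<close>

type_synonym 'f emat = "nat \<Rightarrow> nat \<Rightarrow> ('f \<Rightarrow>\<^sub>L real)"

definition weakstar_top :: "('f::real_normed_vector) emat topology" where
  "weakstar_top = pullback_topology UNIV
      (\<lambda>X (t :: nat \<times> nat \<times> 'f). blinfun_apply (X (fst t) (fst (snd t))) (snd (snd t))) euclidean"

definition nc_dir_sum_hyp :: "(nat \<Rightarrow> 'a set) \<Rightarrow> nat \<Rightarrow> nat \<Rightarrow> (nat \<Rightarrow> nat)
    \<Rightarrow> (nat \<Rightarrow> nat \<Rightarrow> nat \<Rightarrow> real) \<Rightarrow> (nat \<Rightarrow> 'a) \<Rightarrow> bool" where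
  "nc_dir_sum_hyp K n p ns \<alpha> xs \<longleftrightarrow> 1 \<le> n \<and>
     (\<forall>i<p. 1 \<le> ns i \<and> xs i \<in> K (ns i) \<and> real_isometry n (ns i) (\<alpha> i)) \<and>
     msum p (\<lambda>i. (\<lambda>a b. \<Sum>c<ns i. \<alpha> i a c * \<alpha> i b c)) = id_mat n"

definition real_compact_nc_convex :: "(nat \<Rightarrow> ('f::banach) emat set) \<Rightarrow> bool" where
  "real_compact_nc_convex K \<longleftrightarrow>
     (\<forall>n\<ge>1. K n \<subseteq> mat_sz n n) \<and>
     (\<forall>n\<ge>1. compactin weakstar_top (K n)) \<and>
     (\<forall>n p ns \<alpha> xs. nc_dir_sum_hyp K n p ns \<alpha> xs \<longrightarrow>
        msum p (\<lambda>i. mconj n (ns i) (\<alpha> i) (xs i)) \<in> K n) \<and>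
     (\<forall>n m \<beta> x. 1 \<le> n \<and> 1 \<le> m \<and> x \<in> K n \<and> real_isometry n m \<beta> \<longrightarrow>
        mconj m n (mtr \<beta>) x \<in> K m)"

definition symmetric_nc :: "(nat \<Rightarrow> ('f::banach) emat set) \<Rightarrow> bool" where
  "symmetric_nc K \<longleftrightarrow> (\<forall>n\<ge>1. \<forall>k\<in>K n. mtr k = k)"

text \<open>A(K): continuous nc affine maps K -> disjoint union of the M_n(R), given
  level-wise as f n : M_n(E) -> M_n(R) (only values on K n matter).\<close>
definition ncA :: "(nat \<Rightarrow> ('f::banach) emat set)
    \<Rightarrow> (nat \<Rightarrow> 'f emat \<Rightarrow> (nat \<Rightarrow> nat \<Rightarrow> real)) set" where
  "ncA K = {f.
     (\<forall>n\<ge>1. \<forall>x\<in>K n. f n x \<in> mat_sz n n) \<and>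
     (\<forall>n\<ge>1. continuous_map (subtopology weakstar_top (K n)) euclidean (f n)) \<and>
     (\<forall>n p ns \<alpha> xs. nc_dir_sum_hyp K n p ns \<alpha> xs \<longrightarrow>
        f n (msum p (\<lambda>i. mconj n (ns i) (\<alpha> i) (xs i)))
          = msum p (\<lambda>i. mconj n (ns i) (\<alpha> i) (f (ns i) (xs i)))) \<and>
     (\<forall>n m \<beta> x. 1 \<le> n \<and> 1 \<le> m \<and> x \<in> K n \<and> real_isometry n m \<beta> \<longrightarrow>
        f m (mconj m n (mtr \<beta>) x) = mconj m n (mtr \<beta>) (f n x))}"

definition ncA_star :: "(nat \<Rightarrow> 'f emat \<Rightarrow> (nat \<Rightarrow> nat \<Rightarrow> real))
    \<Rightarrow> (nat \<Rightarrow> 'f emat \<Rightarrow> (nat \<Rightarrow> nat \<Rightarrow> real))" where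
  "ncA_star f = (\<lambda>n x. mtr (f n x))"

definition ncA_trivial_involution :: "(nat \<Rightarrow> ('f::banach) emat set) \<Rightarrow> bool" where
  "ncA_trivial_involution K \<longleftrightarrow>
     (\<forall>f\<in>ncA K. \<forall>n\<ge>1. \<forall>k\<in>K n. ncA_star f n k = f n k)"

definition mstar :: "('v \<Rightarrow> 'v) \<Rightarrow> (nat \<Rightarrow> nat \<Rightarrow> 'v) \<Rightarrow> (nat \<Rightarrow> nat \<Rightarrow> 'v)" where
  "mstar s X = (\<lambda>i j. s (X j i))"

definition diag_unit :: "nat \<Rightarrow> 'v::zero \<Rightarrow> (nat \<Rightarrow> nat \<Rightarrow> 'v)" where
  "diag_unit n e = (\<lambda>i j. if i < n \<and> j = i then e else 0)"

definition herm :: "('v::real_vector \<Rightarrow> 'v) \<Rightarrow> nat \<Rightarrow> (nat \<Rightarrow> nat \<Rightarrow> 'v) set" where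
  "herm s n = {X \<in> mat_sz n n. mstar s X = X}"

definition real_operator_system ::
    "('v::real_vector \<Rightarrow> 'v) \<Rightarrow> (nat \<Rightarrow> (nat \<Rightarrow> nat \<Rightarrow> 'v) set) \<Rightarrow> 'v \<Rightarrow> bool" where
  "real_operator_system s C e \<longleftrightarrow>
     linear s \<and> (\<forall>v. s (s v) = v) \<and>
     (\<forall>n\<ge>1. C n \<subseteq> herm s n) \<and>
     (\<forall>n\<ge>1. \<forall>X\<in>C n. \<forall>Y\<in>C n. (\<lambda>i j. X i j + Y i j) \<in> C n) \<and>
     (\<forall>n\<ge>1. \<forall>X\<in>C n. \<forall>r::real. 0 \<le> r \<longrightarrow> (\<lambda>i j. r *\<^sub>R X i j) \<in> C n) \<and>
     (\<forall>n\<ge>1. \<forall>X\<in>C n. (\<lambda>i j. - X i j) \<in> C n \<longrightarrow> X = (\<lambda>i j. 0)) \<and>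
     (\<forall>m n \<alpha> X. 1 \<le> m \<and> 1 \<le> n \<and> \<alpha> \<in> mat_sz m n \<and> X \<in> C n \<longrightarrow> mconj m n \<alpha> X \<in> C m) \<and>
     s e = e \<and>
     (\<forall>n\<ge>1. \<forall>X\<in>herm s n. \<exists>r>0. (\<lambda>i j. r *\<^sub>R diag_unit n e i j + X i j) \<in> C n) \<and>
     (\<forall>n\<ge>1. \<forall>X\<in>herm s n.
        (\<forall>r>0. (\<lambda>i j. r *\<^sub>R diag_unit n e i j + X i j) \<in> C n) \<longrightarrow> X \<in> C n)"

definition real_psd :: "nat \<Rightarrow> (nat \<Rightarrow> nat \<Rightarrow> real) \<Rightarrow> bool" where
  "real_psd k A \<longleftrightarrow> (\<forall>a<k. \<forall>b<k. A a b = A b a) \<and>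
     (\<forall>\<xi>::nat \<Rightarrow> real. 0 \<le> (\<Sum>a<k. \<Sum>b<k. \<xi> a * A a b * \<xi> b))"

text \<open>Unital completely positive maps V -> M_n(R).  The amplification of phi to
  M_m(V) sends X to the mn x mn block matrix [phi(X_ij)], indexed by (i*n+a, j*n+b).\<close>
definition ucp ::
    "('v::real_vector \<Rightarrow> 'v) \<Rightarrow> (nat \<Rightarrow> (nat \<Rightarrow> nat \<Rightarrow> 'v) set) \<Rightarrow> 'v \<Rightarrow> nat
      \<Rightarrow> ('v \<Rightarrow> (nat \<Rightarrow> nat \<Rightarrow> real)) \<Rightarrow> bool" where
  "ucp s C e n \<phi> \<longleftrightarrow>
     (\<forall>v. \<phi> v \<in> mat_sz n n) \<and>
     (\<forall>a b u v. \<phi> (a *\<^sub>R u + b *\<^sub>R v) = (\<lambda>i j. a * \<phi> u i j + b * \<phi> v i j)) \<and>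
     \<phi> e = id_mat n \<and>
     (\<forall>m\<ge>1. \<forall>X\<in>C m. real_psd (m * n)
        (\<lambda>p q. \<phi> (X (p div n) (q div n)) (p mod n) (q mod n)))"

end

theory Submission
  imports Defs
begin

(* Evaluations at points of the predual are continuous nc affine maps, so a trivial involution on
   A(K) forces k^T = k.  Conversely, for symmetric K it suffices to show f(y) symmetric for
   y in K_2 (compress to two coordinates).  The mean of y and of its conjugate by the rotation
   [[0,1],[-1,0]] is a compression of a direct sum, hence lies in K_2, and for symmetric y it is a
   scalar matrix c (+) c; since f respects direct sums and compressions, f maps it to a scalar
   matrix, and its off-diagonal entry (f(y)_01 - f(y)_10)/2 vanishes.

   For an operator system V: if the involution is trivial, positivity of phi(r e + v) for large r
   makes phi(v) symmetric.  If s v ~= v, then k = v - s v is skew.  The self-adjoint 2 x 2 matrices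
   over V form an Archimedean order-unit space in which one of [[0,k],[k*,0]], -[[0,k],[k*,0]] is not
   positive, so a Zorn (Krein extension) argument gives a state that is nonzero there.  Read as a
   map V -> M_2(R), a rotation-invariant such state is a UCP map phi with phi(k)^T = -phi(k) ~= phi(k). *)

section \<open>Real 2 x 2 matrices and quadratic forms\<close>

definition mat2 :: "'a \<Rightarrow> 'a \<Rightarrow> 'a \<Rightarrow> 'a \<Rightarrow> nat \<Rightarrow> nat \<Rightarrow> 'a::zero" where
  "mat2 a b c d = (\<lambda>i j. if i = 0 \<and> j = 0 then a else if i = 0 \<and> j = 1 then b
     else if i = 1 \<and> j = 0 then c else if i = 1 \<and> j = 1 then d else 0)"

lemma mat2_simps [simp]:
  "mat2 a b c d 0 0 = a" "mat2 a b c d 0 (Suc 0) = b" "mat2 a b c d (Suc 0) 0 = c"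
  "mat2 a b c d (Suc 0) (Suc 0) = d"
  by (simp_all add: mat2_def)

lemma mat2_in_mat_sz [simp]: "mat2 a b c d \<in> mat_sz 2 2"
  by (simp add: mat2_def mat_sz_def)

lemma mat2_cases: "\<exists>a b c d. X = mat2 a b c d" if "X \<in> mat_sz 2 2"
proof (intro exI ext)
  fix i j
  show "X i j = mat2 (X 0 0) (X 0 1) (X 1 0) (X 1 1) i j"
    using that by (cases "i < 2 \<and> j < 2") (auto simp: mat2_def mat_sz_def less_2_cases_iff)
qed

lemma mat2_eq_iff: "mat2 a b c d = mat2 a' b' c' d' \<longleftrightarrow> a = a' \<and> b = b' \<and> c = c' \<and> d = d'"
  by (metis mat2_simps)

lemma mstar_mat2: "mstar f (mat2 a b c d) = mat2 (f a) (f c) (f b) (f d)" if "f 0 = 0"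
  using that by (auto simp: mstar_def mat2_def fun_eq_iff)

lemma mat2_add:
  "(\<lambda>i j. mat2 (a::'a::monoid_add) b c d i j + mat2 a' b' c' d' i j)
    = mat2 (a + a') (b + b') (c + c') (d + d')"
  by (simp add: mat2_def fun_eq_iff)

lemma mat2_scaleR:
  "(\<lambda>i j. r *\<^sub>R mat2 (a::'a::real_vector) b c d i j) = mat2 (r *\<^sub>R a) (r *\<^sub>R b) (r *\<^sub>R c) (r *\<^sub>R d)"
  by (simp add: mat2_def fun_eq_iff)

lemma mtr_mat2: "mtr (mat2 a b c d) = mat2 a c b d"
  by (auto simp: mtr_def mat2_def fun_eq_iff)

definition rot2 :: "nat \<Rightarrow> nat \<Rightarrow> real" where
  "rot2 = mat2 0 1 (-1) 0"

lemma real_isometry_rot2: "real_isometry 2 2 rot2"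
  unfolding real_isometry_def rot2_def by (auto simp: mat2_def mat_sz_def lessThan_nat_numeral)

lemma mconj_rot2: "mconj 2 2 (mtr rot2) X = mat2 (X 1 1) (- X 1 0) (- X 0 1) (X 0 0)"
  by (auto simp: mconj_def mtr_def rot2_def mat2_def lessThan_nat_numeral fun_eq_iff)

lemma real_psd_cong:
  assumes "real_psd k A" and "\<And>a b. a < k \<Longrightarrow> b < k \<Longrightarrow> A a b = B a b"
  shows "real_psd k B"
proof -
  have "(\<Sum>a<k. \<Sum>b<k. \<xi> a * A a b * \<xi> b) = (\<Sum>a<k. \<Sum>b<k. \<xi> a * B a b * \<xi> b)" for \<xi>
    using assms(2) by (intro sum.cong) auto
  with assms show ?thesis unfolding real_psd_def by simp
qed

lemma block_quadratic_form:
  fixes \<phi> :: "'v::real_vector \<Rightarrow> nat \<Rightarrow> nat \<Rightarrow> real" and \<xi> :: "nat \<Rightarrow> real" and m :: nat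
  assumes lin: "\<And>i j. linear (\<lambda>v. \<phi> v i j)"
  defines "\<alpha> \<equiv> \<lambda>i p. if i < 2 \<and> p < m then \<xi> (i + p * 2) else 0"
  shows "(\<Sum>a<m * 2. \<Sum>b<m * 2. \<xi> a * \<phi> (X (a div 2) (b div 2)) (a mod 2) (b mod 2) * \<xi> b)
       = (\<Sum>i<2. \<Sum>j<2. \<phi> (mconj 2 m \<alpha> X i j) i j)"
proof -
  let ?f = "\<lambda>i j p q. \<xi> (i + p * 2) * \<phi> (X p q) i j * \<xi> (j + q * 2)"
  have "(\<Sum>a<m * 2. \<Sum>b<m * 2. \<xi> a * \<phi> (X (a div 2) (b div 2)) (a mod 2) (b mod 2) * \<xi> b)
      = (\<Sum>p<m. \<Sum>i<2. \<Sum>q<m. \<Sum>j<2. \<xi> (i + p * 2)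
          * \<phi> (X ((i + p * 2) div 2) ((j + q * 2) div 2)) ((i + p * 2) mod 2) ((j + q * 2) mod 2)
          * \<xi> (j + q * 2))"
    by (simp only: sum_mult_product)
  also have "\<dots> = (\<Sum>p<m. \<Sum>i<2. \<Sum>q<m. \<Sum>j<2. ?f i j p q)"
    by (intro sum.cong refl) simp
  also have "\<dots> = (\<Sum>p<m. \<Sum>i<2. \<Sum>j<2. \<Sum>q<m. ?f i j p q)"
    by (rule sum.cong[OF refl], rule sum.cong[OF refl], rule sum.swap)
  also have "\<dots> = (\<Sum>i<2. \<Sum>p<m. \<Sum>j<2. \<Sum>q<m. ?f i j p q)"
    by (rule sum.swap)
  also have "\<dots> = (\<Sum>i<2. \<Sum>j<2. \<Sum>p<m. \<Sum>q<m. ?f i j p q)"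
    by (rule sum.cong[OF refl], rule sum.swap)
  also have "\<dots> = (\<Sum>i<2. \<Sum>j<2. \<phi> (mconj 2 m \<alpha> X i j) i j)"
    by (intro sum.cong refl)
      (simp add: mconj_def \<alpha>_def linear_sum[OF lin] linear_scale[OF lin] mult_ac)
  finally show ?thesis .
qed

section \<open>Order-unit spaces and the Krein extension theorem\<close>

locale order_unit_cone =
  fixes P :: "'w::real_vector set" and u :: 'w
  assumes cone_add: "x \<in> P \<Longrightarrow> z \<in> P \<Longrightarrow> x + z \<in> P"
    and cone_scaleR: "x \<in> P \<Longrightarrow> 0 \<le> r \<Longrightarrow> r *\<^sub>R x \<in> P"
    and order_unit: "\<exists>r>0. r *\<^sub>R u + x \<in> P"
begin

lemma unit_in_cone: "u \<in> P"
proof -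
  obtain r where r: "r > 0" "r *\<^sub>R u \<in> P" using order_unit[of 0] by auto
  have "(1/r) *\<^sub>R (r *\<^sub>R u) \<in> P" by (rule cone_scaleR[OF r(2)]) (use r(1) in simp)
  with r(1) show ?thesis by simp
qed

lemma zero_in_cone: "0 \<in> P"
  using cone_scaleR[OF unit_in_cone, of 0] by simp

lemma unit_scaleR_in_cone_nonneg:
  assumes "P \<noteq> UNIV" and "t *\<^sub>R u \<in> P"
  shows "0 \<le> t"
proof (rule ccontr)
  assume "\<not> 0 \<le> t"
  then have "(-1/t) *\<^sub>R (t *\<^sub>R u) \<in> P" by (intro cone_scaleR[OF assms(2)]) simp
  with \<open>\<not> 0 \<le> t\<close> have minus_u: "- u \<in> P" by simp
  have "y \<in> P" for y
  proof -
    obtain r where r: "r > 0" "r *\<^sub>R u + y \<in> P" using order_unit by blast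
    have "(r *\<^sub>R u + y) + r *\<^sub>R (- u) \<in> P"
      by (rule cone_add[OF r(2) cone_scaleR[OF minus_u]]) (use r(1) in simp)
    then show ?thesis by simp
  qed
  with assms(1) show False by blast
qed

text \<open>The graph of a unital positive linear functional on a subspace; single-valuedness
  follows from positivity (positive_graph_unique).\<close>
definition positive_graph :: "('w \<times> real) set \<Rightarrow> bool" where
  "positive_graph G \<longleftrightarrow> (u, 1) \<in> G \<and>
     (\<forall>x a z b c d. (x, a) \<in> G \<longrightarrow> (z, b) \<in> G \<longrightarrow> (c *\<^sub>R x + d *\<^sub>R z, c * a + d * b) \<in> G) \<and>
     (\<forall>x a. (x, a) \<in> G \<longrightarrow> x \<in> P \<longrightarrow> 0 \<le> a)"

lemma positive_graph_unit: "positive_graph G \<Longrightarrow> (u, 1) \<in> G"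
  unfolding positive_graph_def by blast

lemma positive_graph_lincomb:
  "positive_graph G \<Longrightarrow> (x, a) \<in> G \<Longrightarrow> (z, b) \<in> G \<Longrightarrow> (c *\<^sub>R x + d *\<^sub>R z, c * a + d * b) \<in> G"
  unfolding positive_graph_def by blast

lemma positive_graph_nonneg: "positive_graph G \<Longrightarrow> (x, a) \<in> G \<Longrightarrow> x \<in> P \<Longrightarrow> 0 \<le> a"
  unfolding positive_graph_def by blast

lemma positive_graph_scaleR: "positive_graph G \<Longrightarrow> (x, a) \<in> G \<Longrightarrow> (c *\<^sub>R x, c * a) \<in> G"
  using positive_graph_lincomb[of G x a x a c 0] by simp

lemma positive_graph_mono:
  assumes G: "positive_graph G" and "(x, a) \<in> G" "(z, b) \<in> G" "z - x \<in> P"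
  shows "a \<le> b"
proof -
  have "(z - x, b - a) \<in> G"
    using positive_graph_lincomb[OF G assms(3,2), of 1 "-1"] by simp
  from positive_graph_nonneg[OF G this assms(4)] show ?thesis by simp
qed

lemma positive_graph_unique:
  "positive_graph G \<Longrightarrow> (x, a) \<in> G \<Longrightarrow> (x, b) \<in> G \<Longrightarrow> a = b"
  using positive_graph_mono[of G x a x b] positive_graph_mono[of G x b x a] zero_in_cone
  by force

text \<open>The least value that a positive extension of G can take at x0.\<close>
definition extension_value :: "('w \<times> real) set \<Rightarrow> 'w \<Rightarrow> real" where
  "extension_value G x0 = Sup {a. \<exists>x. (x, a) \<in> G \<and> x0 - x \<in> P}"

lemma extension_value_least:
  assumes G: "positive_graph G" and bound: "\<And>x a. (x, a) \<in> G \<Longrightarrow> x0 - x \<in> P \<Longrightarrow> a \<le> b"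
  shows "extension_value G x0 \<le> b"
  unfolding extension_value_def
proof (rule cSup_least)
  obtain r where "r > 0" "r *\<^sub>R u + x0 \<in> P" using order_unit by blast
  moreover have "((-r) *\<^sub>R u, -r) \<in> G"
    using positive_graph_scaleR[OF G positive_graph_unit[OF G], of "-r"] by simp
  ultimately have "-r \<in> {a. \<exists>x. (x, a) \<in> G \<and> x0 - x \<in> P}"
    by (auto intro!: exI[of _ "- (r *\<^sub>R u)"] simp: add.commute)
  then show "{a. \<exists>x. (x, a) \<in> G \<and> x0 - x \<in> P} \<noteq> {}" by blast
qed (use bound in blast)

lemma extension_value_le:
  assumes G: "positive_graph G" and "(z, b) \<in> G" "z - x0 \<in> P"
  shows "extension_value G x0 \<le> b"
proof (rule extension_value_least[OF G])
  fix x a assume "(x, a) \<in> G" "x0 - x \<in> P"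
  with assms have "z - x \<in> P" using cone_add[of "z - x0" "x0 - x"] by simp
  with positive_graph_mono[OF G \<open>(x, a) \<in> G\<close> assms(2)] show "a \<le> b" .
qed

lemma extension_value_ge:
  assumes G: "positive_graph G" and "(x, a) \<in> G" "x0 - x \<in> P"
  shows "a \<le> extension_value G x0"
  unfolding extension_value_def
proof (rule cSup_upper)
  obtain r where r: "r *\<^sub>R u + (- x0) \<in> P" using order_unit by blast
  have "(r *\<^sub>R u, r) \<in> G"
    using positive_graph_scaleR[OF G positive_graph_unit[OF G], of r] by simp
  show "bdd_above {a. \<exists>x. (x, a) \<in> G \<and> x0 - x \<in> P}"
  proof (rule bdd_aboveI)
    fix a assume "a \<in> {a. \<exists>x. (x, a) \<in> G \<and> x0 - x \<in> P}"
    then obtain x where "(x, a) \<in> G" "x0 - x \<in> P" by blast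
    moreover from this(2) have "(r *\<^sub>R u + - x0) + (x0 - x) \<in> P" by (rule cone_add[OF r])
    then have "r *\<^sub>R u - x \<in> P" by simp
    ultimately show "a \<le> r" using positive_graph_mono[OF G _ \<open>(r *\<^sub>R u, r) \<in> G\<close>] by blast
  qed
qed (use assms in blast)

definition graph_extend :: "('w \<times> real) set \<Rightarrow> 'w \<Rightarrow> real \<Rightarrow> ('w \<times> real) set" where
  "graph_extend G x0 c = {(x + t *\<^sub>R x0, a + t * c) | x a t. (x, a) \<in> G}"

lemma graph_extendI: "(x, a) \<in> G \<Longrightarrow> (x + t *\<^sub>R x0, a + t * c) \<in> graph_extend G x0 c"
  unfolding graph_extend_def by blast

lemma subset_graph_extend: "G \<subseteq> graph_extend G x0 c"
  using graph_extendI[of _ _ G 0] by auto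

lemma graph_extend_point: "positive_graph G \<Longrightarrow> (x0, c) \<in> graph_extend G x0 c"
  using graph_extendI[OF positive_graph_scaleR[OF _ positive_graph_unit, of G 0], of 1] by simp

lemma positive_graph_extend:
  assumes G: "positive_graph G"
  shows "positive_graph (graph_extend G x0 (extension_value G x0))"
proof -
  let ?c = "extension_value G x0"
  have "(u, 1) \<in> graph_extend G x0 ?c"
    using subset_graph_extend positive_graph_unit[OF G] by blast
  moreover have "(c *\<^sub>R x + d *\<^sub>R z, c * a + d * b) \<in> graph_extend G x0 ?c"
    if "(x, a) \<in> graph_extend G x0 ?c" "(z, b) \<in> graph_extend G x0 ?c" for x a z b c d
  proof -
    from that obtain x1 a1 t1 x2 a2 t2 where
      "x = x1 + t1 *\<^sub>R x0" "a = a1 + t1 * ?c" "(x1, a1) \<in> G"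
      "z = x2 + t2 *\<^sub>R x0" "b = a2 + t2 * ?c" "(x2, a2) \<in> G"
      unfolding graph_extend_def by blast
    moreover have "c *\<^sub>R x + d *\<^sub>R z = (c *\<^sub>R x1 + d *\<^sub>R x2) + (c * t1 + d * t2) *\<^sub>R x0"
      and "c * a + d * b = (c * a1 + d * a2) + (c * t1 + d * t2) * ?c"
      using calculation by (simp_all add: algebra_simps)
    ultimately show ?thesis
      unfolding graph_extend_def using positive_graph_lincomb[OF G] by blast
  qed
  moreover have "0 \<le> a + t * ?c" if "(x, a) \<in> G" "x + t *\<^sub>R x0 \<in> P" for x a t
  proof (cases t "0::real" rule: linorder_cases)
    case less
    have "(1 / -t) *\<^sub>R (x + t *\<^sub>R x0) \<in> P" by (rule cone_scaleR[OF that(2)]) (use less in simp)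
    moreover have "(1 / -t) *\<^sub>R (x + t *\<^sub>R x0) = (1 / -t) *\<^sub>R x - x0"
      using less by (simp add: algebra_simps)
    ultimately have "(1 / -t) *\<^sub>R x - x0 \<in> P" by simp
    then have "?c \<le> (1 / -t) * a"
      by (rule extension_value_le[OF G positive_graph_scaleR[OF G that(1)]])
    then show ?thesis using less by (simp add: field_simps)
  next
    case equal
    then show ?thesis using positive_graph_nonneg[OF G that(1)] that(2) by simp
  next
    case greater
    have "(1 / t) *\<^sub>R (x + t *\<^sub>R x0) \<in> P" by (rule cone_scaleR[OF that(2)]) (use greater in simp)
    moreover have "(1 / t) *\<^sub>R (x + t *\<^sub>R x0) = x0 - (- 1 / t) *\<^sub>R x"
      using greater by (simp add: algebra_simps)
    ultimately have "x0 - (- 1 / t) *\<^sub>R x \<in> P" by simp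
    then have "(- 1 / t) * a \<le> ?c"
      by (rule extension_value_ge[OF G positive_graph_scaleR[OF G that(1)]])
    then show ?thesis using greater by (simp add: field_simps)
  qed
  ultimately show ?thesis
    unfolding positive_graph_def graph_extend_def by blast
qed

lemma positive_graph_Union:
  assumes "C \<noteq> {}" "\<And>G. G \<in> C \<Longrightarrow> positive_graph G" "chain\<^sub>\<subseteq> C"
  shows "positive_graph (\<Union>C)"
  unfolding positive_graph_def
proof (intro conjI allI impI)
  show "(u, 1) \<in> \<Union>C" using assms(1,2) positive_graph_unit by blast
next
  fix x a z b c d assume "(x, a) \<in> \<Union>C" "(z, b) \<in> \<Union>C"
  then obtain X Z where "X \<in> C" "Z \<in> C" "(x, a) \<in> X" "(z, b) \<in> Z" by blast
  moreover from this(1,2) have "X \<subseteq> Z \<or> Z \<subseteq> X" using assms(3) unfolding chain_subset_def by blast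
  ultimately show "(c *\<^sub>R x + d *\<^sub>R z, c * a + d * b) \<in> \<Union>C"
    using positive_graph_lincomb assms(2) by (metis UnionI subsetD)
next
  fix x a assume "(x, a) \<in> \<Union>C" "x \<in> P"
  then show "0 \<le> a" using assms(2) positive_graph_nonneg by blast
qed

lemma positive_graph_maximal_total:
  assumes G: "positive_graph G" and max: "\<And>H. positive_graph H \<Longrightarrow> G \<subseteq> H \<Longrightarrow> H = G"
  shows "\<exists>a. (x, a) \<in> G"
  using graph_extend_point[OF G, of x] max[OF positive_graph_extend[OF G] subset_graph_extend]
  by auto

theorem positive_functional_extension:
  assumes G0: "positive_graph G0"
  shows "\<exists>\<omega>. linear \<omega> \<and> (\<forall>x\<in>P. 0 \<le> \<omega> x) \<and> \<omega> u = 1 \<and> (\<forall>(x, a)\<in>G0. \<omega> x = a)"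
proof -
  define A where "A = {G. positive_graph G \<and> G0 \<subseteq> G}"
  have "\<exists>U\<in>A. \<forall>X\<in>C. X \<subseteq> U" if "C \<in> chains A" for C
  proof (cases "C = {}")
    case True
    with G0 show ?thesis unfolding A_def by blast
  next
    case False
    with that have "positive_graph (\<Union>C)" "G0 \<subseteq> \<Union>C"
      using positive_graph_Union[of C] unfolding A_def chains_def by blast+
    then show ?thesis unfolding A_def by blast
  qed
  then obtain G where "G \<in> A" and max: "\<forall>H\<in>A. G \<subseteq> H \<longrightarrow> H = G"
    using Zorn_Lemma2[of A] by blast
  then have G: "positive_graph G" and "G0 \<subseteq> G" unfolding A_def by blast+
  have total: "\<exists>a. (x, a) \<in> G" for x
    by (rule positive_graph_maximal_total[OF G]) (use max \<open>G0 \<subseteq> G\<close> in \<open>auto simp: A_def\<close>)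
  define \<omega> where "\<omega> x = (THE a. (x, a) \<in> G)" for x
  have \<omega>_eq: "\<omega> x = a" if "(x, a) \<in> G" for x a
    unfolding \<omega>_def using that positive_graph_unique[OF G] by blast
  have graph: "(x, \<omega> x) \<in> G" for x
    using total[of x] \<omega>_eq by blast
  have "linear \<omega>"
  proof
    show "\<omega> (x + z) = \<omega> x + \<omega> z" for x z
      using \<omega>_eq[OF positive_graph_lincomb[OF G graph graph, of 1 x 1 z]] by simp
    show "\<omega> (c *\<^sub>R x) = c *\<^sub>R \<omega> x" for c x
      using \<omega>_eq[OF positive_graph_scaleR[OF G graph]] by simp
  qed
  with positive_graph_nonneg[OF G graph] \<omega>_eq positive_graph_unit[OF G] \<open>G0 \<subseteq> G\<close>
  show ?thesis by blast
qed

theorem separation_by_state: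
  assumes archimedean: "\<And>x. (\<forall>r>0. r *\<^sub>R u + x \<in> P) \<Longrightarrow> x \<in> P" and "y \<notin> P"
  shows "\<exists>\<omega>::'w \<Rightarrow> real. linear \<omega> \<and> (\<forall>x\<in>P. 0 \<le> \<omega> x) \<and> \<omega> u = 1 \<and> \<omega> y < 0"
proof -
  obtain r where "r > 0" and r: "r *\<^sub>R u + y \<notin> P" using archimedean \<open>y \<notin> P\<close> by blast
  define G0 where "G0 = {(t *\<^sub>R u, t) | t. True}"
  have G0: "positive_graph G0"
    unfolding positive_graph_def G0_def
    using unit_scaleR_in_cone_nonneg \<open>y \<notin> P\<close>
    by (auto intro!: exI[of _ 1]) (metis scaleR_add_left scaleR_scaleR)
  have ext_value: "extension_value G0 y \<le> -r"
  proof (rule extension_value_least[OF G0])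
    fix x a assume "(x, a) \<in> G0" "y - x \<in> P"
    then have "y - a *\<^sub>R u \<in> P" unfolding G0_def by blast
    show "a \<le> -r"
    proof (rule ccontr)
      assume "\<not> a \<le> -r"
      then have "(y - a *\<^sub>R u) + (a + r) *\<^sub>R u \<in> P"
        using cone_add[OF \<open>y - a *\<^sub>R u \<in> P\<close> cone_scaleR[OF unit_in_cone]] by simp
      with r show False by (simp add: algebra_simps)
    qed
  qed
  obtain \<omega> where "linear \<omega>" "\<forall>x\<in>P. 0 \<le> \<omega> x" "\<omega> u = 1"
    and extends: "\<forall>(x, a)\<in>graph_extend G0 y (extension_value G0 y). \<omega> x = a"
    using positive_functional_extension[OF positive_graph_extend[OF G0]] by blast
  moreover have "\<omega> y < 0"
    using graph_extend_point[OF G0, of y "extension_value G0 y"] extends ext_value \<open>r > 0\<close> by auto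
  ultimately show ?thesis by blast
qed

end

section \<open>Real operator systems\<close>

locale real_opsys =
  fixes s :: "'v::real_vector \<Rightarrow> 'v" and C :: "nat \<Rightarrow> (nat \<Rightarrow> nat \<Rightarrow> 'v) set" and e :: 'v
  assumes real_operator_system: "real_operator_system s C e"
begin

lemma linear_involution: "linear s"
  using real_operator_system unfolding real_operator_system_def by (elim conjE) simp

lemma involution [simp]: "s (s v) = v"
  using real_operator_system unfolding real_operator_system_def by (elim conjE) simp

lemma matrix_cone_herm: "1 \<le> n \<Longrightarrow> C n \<subseteq> herm s n"
  using real_operator_system unfolding real_operator_system_def by (elim conjE) simp

lemma matrix_cone_add: "1 \<le> n \<Longrightarrow> X \<in> C n \<Longrightarrow> Y \<in> C n \<Longrightarrow> (\<lambda>i j. X i j + Y i j) \<in> C n"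
  using real_operator_system unfolding real_operator_system_def by (elim conjE) simp

lemma matrix_cone_scaleR: "1 \<le> n \<Longrightarrow> X \<in> C n \<Longrightarrow> 0 \<le> r \<Longrightarrow> (\<lambda>i j. r *\<^sub>R X i j) \<in> C n"
  using real_operator_system unfolding real_operator_system_def by (elim conjE) simp

lemma matrix_cone_antisym: "1 \<le> n \<Longrightarrow> X \<in> C n \<Longrightarrow> (\<lambda>i j. - X i j) \<in> C n \<Longrightarrow> X = (\<lambda>i j. 0)"
  using real_operator_system unfolding real_operator_system_def by (elim conjE) simp

lemma matrix_cone_mconj:
  "1 \<le> m \<Longrightarrow> 1 \<le> n \<Longrightarrow> \<alpha> \<in> mat_sz m n \<Longrightarrow> X \<in> C n \<Longrightarrow> mconj m n \<alpha> X \<in> C m"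
  using real_operator_system unfolding real_operator_system_def by (elim conjE) simp

lemma unit_self_adjoint [simp]: "s e = e"
  using real_operator_system unfolding real_operator_system_def by (elim conjE) simp

lemma matrix_order_unit:
  "1 \<le> n \<Longrightarrow> X \<in> herm s n \<Longrightarrow> \<exists>r>0. (\<lambda>i j. r *\<^sub>R diag_unit n e i j + X i j) \<in> C n"
  using real_operator_system unfolding real_operator_system_def by (elim conjE) simp

lemma matrix_archimedean: "1 \<le> n \<Longrightarrow> X \<in> herm s n \<Longrightarrow>
    (\<forall>r>0. (\<lambda>i j. r *\<^sub>R diag_unit n e i j + X i j) \<in> C n) \<Longrightarrow> X \<in> C n"
  using real_operator_system unfolding real_operator_system_def by (elim conjE) simp

lemma involution_add [simp]: "s (x + y) = s x + s y"
  and involution_scaleR [simp]: "s (r *\<^sub>R x) = r *\<^sub>R s x"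
  and involution_zero [simp]: "s 0 = 0"
  and involution_minus [simp]: "s (- x) = - s x"
  and involution_diff [simp]: "s (x - y) = s x - s y"
  using linear_involution by (simp_all add: linear_add linear_scale linear_0 linear_neg linear_diff)

theorem ucp_symmetric_if_trivial_involution:
  assumes trivial: "\<forall>v. s v = v" and \<phi>: "ucp s C e n \<phi>"
  shows "mtr (\<phi> v) = \<phi> v"
proof (intro ext)
  fix a b
  have "diag_unit 1 v \<in> herm s 1"
    using trivial by (auto simp: herm_def mat_sz_def mstar_def diag_unit_def fun_eq_iff)
  then obtain r where X: "(\<lambda>i j. r *\<^sub>R diag_unit 1 e i j + diag_unit 1 v i j) \<in> C 1"
    using matrix_order_unit[of 1] by auto
  have cp: "\<And>m X. 1 \<le> m \<Longrightarrow> X \<in> C m \<Longrightarrow>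
      real_psd (m * n) (\<lambda>p q. \<phi> (X (p div n) (q div n)) (p mod n) (q mod n))"
    using \<phi> unfolding ucp_def by blast
  have "real_psd (1 * n) (\<phi> (r *\<^sub>R e + 1 *\<^sub>R v))"
    using cp[OF order.refl X] by (rule real_psd_cong) (simp add: diag_unit_def)
  then have psd: "real_psd n (\<phi> (r *\<^sub>R e + 1 *\<^sub>R v))" by simp
  have "\<phi> v \<in> mat_sz n n" "\<phi> e = id_mat n"
    and lincomb: "\<phi> (r *\<^sub>R e + 1 *\<^sub>R v) = (\<lambda>i j. r * \<phi> e i j + 1 * \<phi> v i j)"
    using \<phi> unfolding ucp_def by blast+
  show "mtr (\<phi> v) a b = \<phi> v a b"
  proof (cases "a < n \<and> b < n")
    case True
    with psd have "\<phi> (r *\<^sub>R e + 1 *\<^sub>R v) b a = \<phi> (r *\<^sub>R e + 1 *\<^sub>R v) a b"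
      unfolding real_psd_def by blast
    moreover have "id_mat n b a = id_mat n a b" by (auto simp: id_mat_def)
    ultimately show ?thesis using lincomb by (simp add: \<open>\<phi> e = id_mat n\<close> mtr_def)
  qed (use \<open>\<phi> v \<in> mat_sz n n\<close> in \<open>auto simp: mtr_def mat_sz_def\<close>)
qed

text \<open>herm2 (a, b, d) = [[Re a, b], [s b, Re d]] with Re a = (a + s a) / 2 parametrises the
  self-adjoint 2 x 2 matrices over V linearly by the real vector space V^3.\<close>
fun herm2 :: "'v \<times> 'v \<times> 'v \<Rightarrow> nat \<Rightarrow> nat \<Rightarrow> 'v" where
  "herm2 (a, b, d) = mat2 ((1/2) *\<^sub>R (a + s a)) b (s b) ((1/2) *\<^sub>R (d + s d))"

lemma herm2_add: "herm2 (x + z) = (\<lambda>i j. herm2 x i j + herm2 z i j)"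
  by (cases x; cases z) (simp add: mat2_add algebra_simps)

lemma herm2_scaleR: "herm2 (r *\<^sub>R x) = (\<lambda>i j. r *\<^sub>R herm2 x i j)"
  by (cases x) (simp add: mat2_scaleR algebra_simps)

lemma herm2_zero: "herm2 0 = (\<lambda>i j. 0)"
  by (simp add: zero_prod_def mat2_def fun_eq_iff)

lemma herm2_in_herm: "herm2 x \<in> herm s 2"
  by (cases x) (simp add: herm_def mstar_mat2 mat2_eq_iff algebra_simps)

lemma herm2_entries:
  assumes "X \<in> herm s 2"
  shows "herm2 (X 0 0, X 0 1, X 1 1) = X"
proof -
  obtain a b c d where X: "X = mat2 a b c d"
    using assms mat2_cases unfolding herm_def by blast
  with assms have "s a = a" "s b = c" "s d = d"
    by (simp_all add: herm_def mstar_mat2 mat2_eq_iff)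
  then show ?thesis by (simp add: X scaleR_2[symmetric])
qed

lemma herm2_unit: "(\<lambda>i j. r *\<^sub>R diag_unit 2 e i j + herm2 x i j) = herm2 (r *\<^sub>R (e, 0, e) + x)"
proof -
  have "(r / 2) *\<^sub>R e + (r / 2) *\<^sub>R e = r *\<^sub>R e"
    by (metis field_sum_of_halves scaleR_add_left)
  then show ?thesis by (cases x) (auto simp: diag_unit_def mat2_def fun_eq_iff algebra_simps)
qed

definition twirl :: "'v \<times> 'v \<times> 'v \<Rightarrow> 'v \<times> 'v \<times> 'v" where
  "twirl = (\<lambda>(a, b, d). (d, - s b, a))"

lemma herm2_twirl: "herm2 (twirl w) = mconj 2 2 (mtr rot2) (herm2 w)"
  by (cases w) (simp add: twirl_def mconj_rot2 add.commute)

definition herm2_cone :: "('v \<times> 'v \<times> 'v) set" where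
  "herm2_cone = {w. herm2 w \<in> C 2}"

lemma order_unit_cone_herm2: "order_unit_cone herm2_cone (e, 0, e)"
proof
  show "x + z \<in> herm2_cone" if "x \<in> herm2_cone" "z \<in> herm2_cone" for x z
    using that matrix_cone_add[of 2] by (simp add: herm2_cone_def herm2_add)
  show "r *\<^sub>R x \<in> herm2_cone" if "x \<in> herm2_cone" "0 \<le> r" for x r
    using that matrix_cone_scaleR[of 2] by (simp add: herm2_cone_def herm2_scaleR)
  show "\<exists>r>0. r *\<^sub>R (e, 0, e) + x \<in> herm2_cone" for x
    using matrix_order_unit[OF _ herm2_in_herm] by (simp add: herm2_cone_def herm2_unit)
qed

lemma herm2_cone_archimedean:
  "(\<forall>r>0. r *\<^sub>R (e, 0, e) + x \<in> herm2_cone) \<Longrightarrow> x \<in> herm2_cone"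
  using matrix_archimedean[OF _ herm2_in_herm] by (simp add: herm2_cone_def herm2_unit)

lemma positive_functional_herm2_eq:
  fixes \<omega> :: "'v \<times> 'v \<times> 'v \<Rightarrow> real"
  assumes "linear \<omega>" and pos: "\<forall>w\<in>herm2_cone. 0 \<le> \<omega> w" and eq: "herm2 w = herm2 w'"
  shows "\<omega> w = \<omega> w'"
proof -
  have "herm2 (w - w') = (\<lambda>i j. 0)" "herm2 (w' - w) = (\<lambda>i j. 0)"
    using eq herm2_add[of w "- w'"] herm2_add[of w' "- w"] herm2_scaleR[of "-1"]
    by (auto simp: fun_eq_iff)
  moreover have "(\<lambda>i j. 0) \<in> C 2"
    using order_unit_cone.zero_in_cone[OF order_unit_cone_herm2] by (simp add: herm2_cone_def herm2_zero)
  ultimately have "w - w' \<in> herm2_cone" "w' - w \<in> herm2_cone"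
    unfolding herm2_cone_def by simp_all
  with pos have "0 \<le> \<omega> (w - w')" "0 \<le> \<omega> (w' - w)" by blast+
  with \<open>linear \<omega>\<close> show ?thesis by (simp add: linear_diff)
qed

text \<open>ucp_of_state \<omega> v has entries 2 \<Omega>(v E_ij), where
  \<Omega> X = \<omega> (X 0 0, (X 0 1 + s (X 1 0)) / 2, X 1 1) extends \<omega> from the self-adjoint part of
  M_2(V) to all of it.\<close>
definition ucp_of_state :: "('v \<times> 'v \<times> 'v \<Rightarrow> real) \<Rightarrow> 'v \<Rightarrow> nat \<Rightarrow> nat \<Rightarrow> real" where
  "ucp_of_state \<omega> v = mat2 (2 * \<omega> (v, 0, 0)) (\<omega> (0, v, 0)) (\<omega> (0, s v, 0)) (2 * \<omega> (0, 0, v))"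

lemma ucp_of_state_lincomb:
  assumes "linear \<omega>"
  shows "ucp_of_state \<omega> (a *\<^sub>R u + b *\<^sub>R v) = (\<lambda>i j. a * ucp_of_state \<omega> u i j + b * ucp_of_state \<omega> v i j)"
proof -
  have \<omega>: "\<omega> (a *\<^sub>R x + b *\<^sub>R y) = a * \<omega> x + b * \<omega> y" for x y
    using assms by (simp add: linear_add linear_scale)
  have "\<omega> (a *\<^sub>R u + b *\<^sub>R v, 0, 0) = a * \<omega> (u, 0, 0) + b * \<omega> (v, 0, 0)"
    "\<omega> (0, a *\<^sub>R u + b *\<^sub>R v, 0) = a * \<omega> (0, u, 0) + b * \<omega> (0, v, 0)"
    "\<omega> (0, s (a *\<^sub>R u + b *\<^sub>R v), 0) = a * \<omega> (0, s u, 0) + b * \<omega> (0, s v, 0)"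
    "\<omega> (0, 0, a *\<^sub>R u + b *\<^sub>R v) = a * \<omega> (0, 0, u) + b * \<omega> (0, 0, v)"
    using \<omega>[of "(u, 0, 0)" "(v, 0, 0)"] \<omega>[of "(0, u, 0)" "(0, v, 0)"]
      \<omega>[of "(0, s u, 0)" "(0, s v, 0)"] \<omega>[of "(0, 0, u)" "(0, 0, v)"]
    by simp_all
  then show ?thesis
    unfolding ucp_of_state_def by (simp add: mat2_def fun_eq_iff algebra_simps)
qed

lemma ucp_of_state_entry_linear: "linear \<omega> \<Longrightarrow> linear (\<lambda>v. ucp_of_state \<omega> v i j)"
  using ucp_of_state_lincomb[of \<omega> 1 _ 1] ucp_of_state_lincomb[of \<omega> _ _ 0]
  by (intro linearI) (simp_all add: fun_eq_iff)

lemma ucp_of_state_adjoint: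
  assumes "linear \<omega>" and "\<forall>w\<in>herm2_cone. 0 \<le> \<omega> w"
  shows "ucp_of_state \<omega> (s v) = mtr (ucp_of_state \<omega> v)"
proof -
  have "\<omega> (s v, 0, 0) = \<omega> (v, 0, 0)" "\<omega> (0, 0, s v) = \<omega> (0, 0, v)"
    using positive_functional_herm2_eq[OF assms] by (simp_all add: add.commute)
  then show ?thesis by (simp add: ucp_of_state_def mtr_mat2)
qed

lemma ucp_of_state_psd:
  fixes \<omega> :: "'v \<times> 'v \<times> 'v \<Rightarrow> real"
  assumes lin: "linear \<omega>" and pos: "\<forall>w\<in>herm2_cone. 0 \<le> \<omega> w" and "1 \<le> m" and X: "X \<in> C m"
  shows "real_psd (m * 2) (\<lambda>p q. ucp_of_state \<omega> (X (p div 2) (q div 2)) (p mod 2) (q mod 2))"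
  unfolding real_psd_def
proof (intro conjI allI impI)
  fix a b
  have "X (b div 2) (a div 2) = s (X (a div 2) (b div 2))"
    using matrix_cone_herm[OF \<open>1 \<le> m\<close>] X by (auto simp: herm_def mstar_def fun_eq_iff)
  then show "ucp_of_state \<omega> (X (a div 2) (b div 2)) (a mod 2) (b mod 2)
      = ucp_of_state \<omega> (X (b div 2) (a div 2)) (b mod 2) (a mod 2)"
    by (simp add: ucp_of_state_adjoint[OF lin pos] mtr_def)
next
  fix \<xi> :: "nat \<Rightarrow> real"
  define \<alpha> where "\<alpha> = (\<lambda>i p. if i < 2 \<and> p < m then \<xi> (i + p * 2) else 0)"
  define Z where "Z = mconj 2 m \<alpha> X"
  have "Z \<in> C 2"
    unfolding Z_def by (rule matrix_cone_mconj) (use \<open>1 \<le> m\<close> X in \<open>auto simp: \<alpha>_def mat_sz_def\<close>)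
  then have "Z \<in> herm s 2" using matrix_cone_herm[of 2] by auto
  then have "herm2 (Z 0 0, Z 0 1, Z 1 1) = Z" and "Z 1 0 = s (Z 0 1)"
    using herm2_entries by (auto simp: herm_def mstar_def fun_eq_iff)
  with \<open>Z \<in> C 2\<close> pos have "0 \<le> \<omega> (Z 0 0, Z 0 1, Z 1 1)"
    unfolding herm2_cone_def by auto
  moreover have "(\<Sum>i<2. \<Sum>j<2. ucp_of_state \<omega> (Z i j) i j) = 2 * \<omega> (Z 0 0, Z 0 1, Z 1 1)"
    using linear_add[OF lin, of "(Z 0 0, 0, 0)" "(0, Z 0 1, 0)"]
      linear_add[OF lin, of "(Z 0 0, Z 0 1, 0)" "(0, 0, Z 1 1)"] \<open>Z 1 0 = s (Z 0 1)\<close>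
    by (simp add: lessThan_nat_numeral ucp_of_state_def One_nat_def)
  moreover have "(\<Sum>a<m * 2. \<Sum>b<m * 2.
      \<xi> a * ucp_of_state \<omega> (X (a div 2) (b div 2)) (a mod 2) (b mod 2) * \<xi> b)
      = (\<Sum>i<2. \<Sum>j<2. ucp_of_state \<omega> (Z i j) i j)"
    unfolding Z_def \<alpha>_def by (rule block_quadratic_form) (rule ucp_of_state_entry_linear[OF lin])
  ultimately show "0 \<le> (\<Sum>a<m * 2. \<Sum>b<m * 2.
      \<xi> a * ucp_of_state \<omega> (X (a div 2) (b div 2)) (a mod 2) (b mod 2) * \<xi> b)"
    by simp
qed

theorem ucp_of_state_ucp:
  fixes \<omega> :: "'v \<times> 'v \<times> 'v \<Rightarrow> real"
  assumes lin: "linear \<omega>" and pos: "\<forall>w\<in>herm2_cone. 0 \<le> \<omega> w"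
    and unital: "\<omega> (e, 0, 0) = 1/2" "\<omega> (0, e, 0) = 0" "\<omega> (0, 0, e) = 1/2"
  shows "ucp s C e 2 (ucp_of_state \<omega>)"
  unfolding ucp_def
proof (intro conjI allI impI ballI)
  show "ucp_of_state \<omega> v \<in> mat_sz 2 2" for v
    by (simp add: ucp_of_state_def)
  show "ucp_of_state \<omega> (a *\<^sub>R u + b *\<^sub>R v) = (\<lambda>i j. a * ucp_of_state \<omega> u i j + b * ucp_of_state \<omega> v i j)"
    for a b u v by (rule ucp_of_state_lincomb[OF lin])
  show "ucp_of_state \<omega> e = id_mat 2"
    using unital by (auto simp: ucp_of_state_def mat2_def id_mat_def fun_eq_iff)
  show "real_psd (m * 2) (\<lambda>p q. ucp_of_state \<omega> (X (p div 2) (q div 2)) (p mod 2) (q mod 2))"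
    if "1 \<le> m" "X \<in> C m" for m X
    by (rule ucp_of_state_psd[OF lin pos that])
qed

lemma exists_state_nonzero_on_skew:
  assumes "s k = - k" and "k \<noteq> 0"
  shows "\<exists>\<omega>::'v \<times> 'v \<times> 'v \<Rightarrow> real.
    linear \<omega> \<and> (\<forall>w\<in>herm2_cone. 0 \<le> \<omega> w) \<and> \<omega> (e, 0, e) = 1 \<and> \<omega> (0, k, 0) \<noteq> 0"
proof -
  interpret herm2: order_unit_cone herm2_cone "(e, 0, e)" by (rule order_unit_cone_herm2)
  have "herm2 (0, k, 0) 0 1 \<noteq> 0"
    using assms by simp
  then have "herm2 (0, k, 0) \<noteq> (\<lambda>i j. 0)" by metis
  then have "(0, k, 0) \<notin> herm2_cone \<or> (0, - k, 0) \<notin> herm2_cone"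
    using matrix_cone_antisym[of 2 "herm2 (0, k, 0)"] herm2_scaleR[of "-1" "(0, k, 0)"]
    by (auto simp: herm2_cone_def)
  then obtain y where "y \<notin> herm2_cone" and y: "y = (0, k, 0) \<or> y = (0, - k, 0)" by blast
  then obtain \<omega> :: "'v \<times> 'v \<times> 'v \<Rightarrow> real" where "linear \<omega>" "\<forall>w\<in>herm2_cone. 0 \<le> \<omega> w"
    "\<omega> (e, 0, e) = 1" "\<omega> y < 0"
    using herm2.separation_by_state[OF herm2_cone_archimedean] by blast
  moreover have "\<omega> (0, - k, 0) = - \<omega> (0, k, 0)"
    using linear_neg[OF \<open>linear \<omega>\<close>, of "(0, k, 0)"] by simp
  ultimately show ?thesis using y by auto
qed

lemma linear_twirl: "linear twirl"
  by (rule linearI) (auto simp: twirl_def split: prod.splits)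

text \<open>Averaging with the twirl splits \<omega> (e, 0, e) = 1 evenly between the diagonal entries and
  kills \<omega> (0, e, 0), while s k = - k keeps \<omega> (0, k, 0).\<close>
lemma exists_unital_state_nonzero_on_skew:
  assumes "s k = - k" and "k \<noteq> 0"
  shows "\<exists>\<omega>::'v \<times> 'v \<times> 'v \<Rightarrow> real. linear \<omega> \<and> (\<forall>w\<in>herm2_cone. 0 \<le> \<omega> w)
    \<and> \<omega> (e, 0, 0) = 1/2 \<and> \<omega> (0, e, 0) = 0 \<and> \<omega> (0, 0, e) = 1/2 \<and> \<omega> (0, k, 0) \<noteq> 0"
proof -
  obtain \<omega> :: "'v \<times> 'v \<times> 'v \<Rightarrow> real" where lin: "linear \<omega>" and pos: "\<forall>w\<in>herm2_cone. 0 \<le> \<omega> w"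
    and "\<omega> (e, 0, e) = 1" and "\<omega> (0, k, 0) \<noteq> 0"
    using exists_state_nonzero_on_skew[OF assms] by blast
  define \<omega>' where "\<omega>' w = (\<omega> w + \<omega> (twirl w)) / 2" for w
  have comp: "linear (\<lambda>w. \<omega> (twirl w))"
    using linear_compose[OF linear_twirl lin] by (simp add: o_def)
  have "linear \<omega>'"
    unfolding \<omega>'_def
    using linear_add[OF lin] linear_scale[OF lin] linear_add[OF comp] linear_scale[OF comp]
    by (intro linearI) (simp_all add: add_divide_distrib algebra_simps)
  moreover have "0 \<le> \<omega>' w" if "w \<in> herm2_cone" for w
  proof -
    have "twirl w \<in> herm2_cone"
      using that matrix_cone_mconj[of 2 2 "mtr rot2"]
      by (simp add: herm2_cone_def herm2_twirl mtr_def rot2_def mat_sz_def mat2_def)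
    with that pos show ?thesis unfolding \<omega>'_def by auto
  qed
  moreover have "\<omega> (e, 0, 0) + \<omega> (0, 0, e) = 1" and "\<omega> (0, - e, 0) = - \<omega> (0, e, 0)"
    using linear_add[OF lin, of "(e, 0, 0)" "(0, 0, e)"] linear_neg[OF lin, of "(0, e, 0)"]
      \<open>\<omega> (e, 0, e) = 1\<close> by simp_all
  moreover have "\<omega>' (0, k, 0) = \<omega> (0, k, 0)"
    using assms(1) by (simp add: \<omega>'_def twirl_def)
  ultimately show ?thesis
    using \<open>\<omega> (0, k, 0) \<noteq> 0\<close> by (intro exI[of _ \<omega>']) (auto simp: \<omega>'_def twirl_def)
qed

theorem trivial_involution_if_ucp_symmetric:
  assumes symmetric: "\<forall>n\<ge>1. \<forall>\<phi>. ucp s C e n \<phi> \<longrightarrow> (\<forall>v. mtr (\<phi> v) = \<phi> v)"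
  shows "s v = v"
proof (rule ccontr)
  define k where "k = v - s v"
  assume "s v \<noteq> v"
  then have skew: "s k = - k" and "k \<noteq> 0" by (auto simp: k_def)
  then obtain \<omega> :: "'v \<times> 'v \<times> 'v \<Rightarrow> real" where lin: "linear \<omega>"
    and pos: "\<forall>w\<in>herm2_cone. 0 \<le> \<omega> w"
    and unital: "\<omega> (e, 0, 0) = 1/2" "\<omega> (0, e, 0) = 0" "\<omega> (0, 0, e) = 1/2"
    and nonzero: "\<omega> (0, k, 0) \<noteq> 0"
    using exists_unital_state_nonzero_on_skew by blast
  let ?\<phi> = "ucp_of_state \<omega>"
  have "?\<phi> k = mtr (?\<phi> k)"
    using symmetric[rule_format, OF _ ucp_of_state_ucp[OF lin pos unital]] by simp
  also have "\<dots> = ?\<phi> (- k)"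
    using ucp_of_state_adjoint[OF lin pos, of k] skew by simp
  also have "\<dots> = (\<lambda>i j. - ?\<phi> k i j)"
    using ucp_of_state_lincomb[OF lin, of "-1" k 0 0] by simp
  finally have "?\<phi> k 0 1 = - ?\<phi> k 0 1" by metis
  with nonzero show False by (simp add: ucp_of_state_def)
qed

end

section \<open>Real compact nc convex sets\<close>

lemma nc_convex_mat_sz: "real_compact_nc_convex K \<Longrightarrow> 1 \<le> n \<Longrightarrow> x \<in> K n \<Longrightarrow> x \<in> mat_sz n n"
  unfolding real_compact_nc_convex_def by blast

lemma nc_convex_compress:
  "real_compact_nc_convex K \<Longrightarrow> 1 \<le> n \<Longrightarrow> 1 \<le> m \<Longrightarrow> x \<in> K n \<Longrightarrow> real_isometry n m \<beta>
    \<Longrightarrow> mconj m n (mtr \<beta>) x \<in> K m"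
  unfolding real_compact_nc_convex_def by blast

lemma nc_convex_dir_sum:
  "real_compact_nc_convex K \<Longrightarrow> nc_dir_sum_hyp K n p ns \<alpha> xs
    \<Longrightarrow> msum p (\<lambda>i. mconj n (ns i) (\<alpha> i) (xs i)) \<in> K n"
  unfolding real_compact_nc_convex_def by blast

lemma ncA_mat_sz: "f \<in> ncA K \<Longrightarrow> 1 \<le> n \<Longrightarrow> x \<in> K n \<Longrightarrow> f n x \<in> mat_sz n n"
  unfolding ncA_def by blast

lemma ncA_compress:
  "f \<in> ncA K \<Longrightarrow> 1 \<le> n \<Longrightarrow> 1 \<le> m \<Longrightarrow> x \<in> K n \<Longrightarrow> real_isometry n m \<beta>
    \<Longrightarrow> f m (mconj m n (mtr \<beta>) x) = mconj m n (mtr \<beta>) (f n x)"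
  unfolding ncA_def by blast

lemma ncA_dir_sum:
  "f \<in> ncA K \<Longrightarrow> nc_dir_sum_hyp K n p ns \<alpha> xs
    \<Longrightarrow> f n (msum p (\<lambda>i. mconj n (ns i) (\<alpha> i) (xs i)))
      = msum p (\<lambda>i. mconj n (ns i) (\<alpha> i) (f (ns i) (xs i)))"
  unfolding ncA_def by blast

definition block_emb :: "nat \<Rightarrow> nat \<Rightarrow> nat \<Rightarrow> real" where
  "block_emb i = (\<lambda>a c. if c < 2 \<and> a = c + 2 * i then 1 else 0)"

definition diag_emb :: "nat \<Rightarrow> nat \<Rightarrow> real" where
  "diag_emb = (\<lambda>a c. if c < 2 \<and> a < 4 \<and> (a = c \<or> a = c + 2) then sqrt (1/2) else 0)"

definition basis_col :: "nat \<Rightarrow> nat \<Rightarrow> nat \<Rightarrow> real" where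
  "basis_col i = (\<lambda>a c. if c = 0 \<and> a = i then 1 else 0)"

definition coord_pair :: "nat \<Rightarrow> nat \<Rightarrow> nat \<Rightarrow> nat \<Rightarrow> real" where
  "coord_pair i j = (\<lambda>a c. if (c = 0 \<and> a = i) \<or> (c = 1 \<and> a = j) then 1 else 0)"

lemma real_isometry_block_emb: "i < 2 \<Longrightarrow> real_isometry 4 2 (block_emb i)"
  by (auto simp: real_isometry_def mat_sz_def block_emb_def lessThan_nat_numeral)

lemma real_isometry_diag_emb: "real_isometry 4 2 diag_emb"
  by (auto simp: real_isometry_def mat_sz_def diag_emb_def lessThan_nat_numeral)

lemma real_isometry_basis_col: "i < 2 \<Longrightarrow> real_isometry 2 1 (basis_col i)"
  by (auto simp: real_isometry_def mat_sz_def basis_col_def lessThan_nat_numeral)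

lemma real_isometry_coord_pair:
  assumes "i < n" "j < n" "i \<noteq> j"
  shows "real_isometry n 2 (coord_pair i j)"
proof -
  have "(\<Sum>a<n. coord_pair i j a c * coord_pair i j a d) = (if c = d then 1 else 0)"
    if "c < 2" "d < 2" for c d
    using that assms by (auto simp: coord_pair_def less_2_cases_iff if_distrib[of "\<lambda>x. x * _"] cong: if_cong)
  with assms show ?thesis by (auto simp: real_isometry_def mat_sz_def coord_pair_def)
qed

lemma block_emb_partition: "msum 2 (\<lambda>i a b. \<Sum>c<2. block_emb i a c * block_emb i b c) = id_mat 4"
  by (auto simp: msum_def id_mat_def block_emb_def lessThan_nat_numeral fun_eq_iff)

lemma basis_col_partition: "msum 2 (\<lambda>i a b. \<Sum>c<1. basis_col i a c * basis_col i b c) = id_mat 2"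
  by (auto simp: msum_def id_mat_def basis_col_def lessThan_nat_numeral fun_eq_iff)

lemma compress_diag_emb_dir_sum:
  "mconj 2 4 (mtr diag_emb) (msum 2 (\<lambda>i. mconj 4 2 (block_emb i) (xs i)))
    = mat2 ((1/2) *\<^sub>R (xs 0 0 0 + xs 1 0 0)) ((1/2) *\<^sub>R (xs 0 0 1 + xs 1 0 1))
        ((1/2) *\<^sub>R (xs 0 1 0 + xs 1 1 0)) ((1/2) *\<^sub>R (xs 0 1 1 + xs 1 1 1))"
  (is "?L = ?R")
proof (intro ext)
  fix a b :: nat
  show "?L a b = ?R a b"
    by (cases "a < 2 \<and> b < 2")
      (auto simp: mconj_def mtr_def diag_emb_def block_emb_def msum_def mat2_def less_2_cases_iff
        lessThan_nat_numeral scaleR_add_right[symmetric])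
qed

lemma dir_sum_basis_col: "msum 2 (\<lambda>i. mconj 2 1 (basis_col i) X) = mat2 (X 0 0) 0 0 (X 0 0)"
  by (auto simp: mconj_def basis_col_def msum_def mat2_def lessThan_nat_numeral fun_eq_iff)

lemma compress_basis_col: "mconj 1 2 (mtr (basis_col 0)) X = diag_unit 1 (X 0 0)"
  by (auto simp: mconj_def mtr_def basis_col_def diag_unit_def lessThan_nat_numeral fun_eq_iff)

lemma sum_sum_delta:
  fixes n :: nat
  assumes "i < n" "j < n"
  shows "(\<Sum>c<n. \<Sum>d<n. if c = i then if d = j then x else 0 else 0) = x"
proof -
  have "(\<Sum>d<n. if c = i then if d = j then x else 0 else 0) = (if c = i then x else 0)" for c
    using assms by (cases "c = i") simp_all
  with assms show ?thesis by simp
qed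

lemma compress_coord_pair:
  assumes "i < n" "j < n" "i \<noteq> j"
  shows "mconj 2 n (mtr (coord_pair i j)) X 0 1 = X i j"
    and "mconj 2 n (mtr (coord_pair i j)) X 1 0 = X j i"
  using assms by (simp_all add: mconj_def mtr_def coord_pair_def if_distrib[of "\<lambda>x. x * _"]
    if_distrib[of "\<lambda>x. x *\<^sub>R _"] sum_sum_delta cong: if_cong)

text \<open>The mean of X and of its conjugate by rot2, cf. mconj_rot2.\<close>
definition rot2_average :: "(nat \<Rightarrow> nat \<Rightarrow> 'a::real_vector) \<Rightarrow> nat \<Rightarrow> nat \<Rightarrow> 'a" where
  "rot2_average X = mat2 ((1/2) *\<^sub>R (X 0 0 + X 1 1)) ((1/2) *\<^sub>R (X 0 1 - X 1 0))
     ((1/2) *\<^sub>R (X 1 0 - X 0 1)) ((1/2) *\<^sub>R (X 0 0 + X 1 1))"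

definition rot2_pair :: "(nat \<Rightarrow> nat \<Rightarrow> 'a::real_vector) \<Rightarrow> nat \<Rightarrow> nat \<Rightarrow> nat \<Rightarrow> 'a" where
  "rot2_pair X i = (if i = 0 then X else mconj 2 2 (mtr rot2) X)"

lemma rot2_average_compress:
  "rot2_average X = mconj 2 4 (mtr diag_emb) (msum 2 (\<lambda>i. mconj 4 2 (block_emb i) (rot2_pair X i)))"
  by (simp add: compress_diag_emb_dir_sum rot2_average_def rot2_pair_def mconj_rot2 add.commute)

lemma rot2_pair_dir_sum_hyp:
  assumes K: "real_compact_nc_convex K" and y: "y \<in> K 2"
  shows "nc_dir_sum_hyp K 4 2 (\<lambda>_. 2) block_emb (rot2_pair y)"
  using nc_convex_compress[OF K _ _ y real_isometry_rot2] real_isometry_block_emb block_emb_partition y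
  unfolding nc_dir_sum_hyp_def rot2_pair_def by auto

lemma nc_convex_rot2_average:
  "real_compact_nc_convex K \<Longrightarrow> y \<in> K 2 \<Longrightarrow> rot2_average y \<in> K 2"
  unfolding rot2_average_compress
  by (intro nc_convex_compress nc_convex_dir_sum rot2_pair_dir_sum_hyp real_isometry_diag_emb) auto

lemma ncA_rot2_average:
  assumes K: "real_compact_nc_convex K" and f: "f \<in> ncA K" and y: "y \<in> K 2"
  shows "f 2 (rot2_average y) = rot2_average (f 2 y)"
proof -
  have "f 2 (rot2_pair y i) = rot2_pair (f 2 y) i" for i
    using ncA_compress[OF f _ _ y real_isometry_rot2] by (simp add: rot2_pair_def)
  then show ?thesis
    unfolding rot2_average_compress
    using ncA_compress[OF f _ _ nc_convex_dir_sum[OF K rot2_pair_dir_sum_hyp[OF K y]] real_isometry_diag_emb]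
      ncA_dir_sum[OF f rot2_pair_dir_sum_hyp[OF K y]]
    by simp
qed

lemma ncA_scalar_2:
  assumes K: "real_compact_nc_convex K" and f: "f \<in> ncA K" and c: "mat2 c 0 0 c \<in> K 2"
  shows "f 2 (mat2 c 0 0 c) = mat2 (f 1 (diag_unit 1 c) 0 0) 0 0 (f 1 (diag_unit 1 c) 0 0)"
proof -
  have "diag_unit 1 c \<in> K 1"
    using nc_convex_compress[OF K one_le_numeral order.refl c real_isometry_basis_col[of 0]]
    unfolding compress_basis_col by simp
  then have hyp: "nc_dir_sum_hyp K 2 2 (\<lambda>_. 1) basis_col (\<lambda>_. diag_unit 1 c)"
    unfolding nc_dir_sum_hyp_def using real_isometry_basis_col basis_col_partition by auto
  have "mat2 c 0 0 c = msum 2 (\<lambda>i. mconj 2 1 (basis_col i) (diag_unit 1 c))"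
    unfolding dir_sum_basis_col by (simp add: diag_unit_def)
  then have "f 2 (mat2 c 0 0 c) = msum 2 (\<lambda>i. mconj 2 1 (basis_col i) (f 1 (diag_unit 1 c)))"
    using ncA_dir_sum[OF f hyp] by simp
  then show ?thesis unfolding dir_sum_basis_col .
qed

lemma ncA_symmetric_2:
  assumes K: "real_compact_nc_convex K" and sym: "symmetric_nc K" and f: "f \<in> ncA K"
    and y: "y \<in> K 2"
  shows "f 2 y 0 1 = f 2 y 1 0"
proof -
  define c where "c = (1/2) *\<^sub>R (y 0 0 + y 1 1)"
  have "y 1 0 = y 0 1"
    using sym y unfolding symmetric_nc_def mtr_def by (metis one_le_numeral)
  then have avg: "rot2_average y = mat2 c 0 0 c"
    by (simp add: rot2_average_def c_def)
  have "rot2_average (f 2 y) = f 2 (mat2 c 0 0 c)"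
    using ncA_rot2_average[OF K f y] avg by simp
  also have "\<dots> = mat2 (f 1 (diag_unit 1 c) 0 0) 0 0 (f 1 (diag_unit 1 c) 0 0)"
    by (rule ncA_scalar_2[OF K f]) (use nc_convex_rot2_average[OF K y] avg in simp)
  finally have "rot2_average (f 2 y) 0 1 = 0" by simp
  then show ?thesis by (simp add: rot2_average_def)
qed

lemma ncA_symmetric:
  assumes K: "real_compact_nc_convex K" and sym: "symmetric_nc K" and f: "f \<in> ncA K"
    and "1 \<le> n" and k: "k \<in> K n"
  shows "mtr (f n k) = f n k"
proof (intro ext)
  fix i j
  show "mtr (f n k) i j = f n k i j"
  proof (cases "i < n \<and> j < n \<and> i \<noteq> j")
    case True
    then have iso: "real_isometry n 2 (coord_pair i j)"
      using real_isometry_coord_pair by blast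
    let ?y = "mconj 2 n (mtr (coord_pair i j)) k"
    have "f 2 ?y 0 1 = f 2 ?y 1 0"
      using ncA_symmetric_2[OF K sym f nc_convex_compress[OF K \<open>1 \<le> n\<close> _ k iso]] by simp
    then show ?thesis
      using ncA_compress[OF f \<open>1 \<le> n\<close> _ k iso] compress_coord_pair[of i n j "f n k"] True
      by (simp add: mtr_def)
  next
    case False
    then show ?thesis
      using ncA_mat_sz[OF f \<open>1 \<le> n\<close> k] by (auto simp: mat_sz_def mtr_def)
  qed
qed

definition nc_eval :: "'f::real_normed_vector \<Rightarrow> nat \<Rightarrow> 'f emat \<Rightarrow> nat \<Rightarrow> nat \<Rightarrow> real" where
  "nc_eval \<xi> n x = (\<lambda>i j. blinfun_apply (x i j) \<xi>)"

lemma continuous_map_nc_eval: "continuous_map weakstar_top euclidean (nc_eval \<xi> n)"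
proof -
  define g where "g = (\<lambda>(h :: nat \<times> nat \<times> 'a \<Rightarrow> real) i j. h (i, j, \<xi>))"
  have "continuous_on UNIV g"
    unfolding g_def by (intro continuous_on_coordinatewise_then_product continuous_on_product_coordinates)
  then have "continuous_map euclidean euclidean g" by (simp add: continuous_map_iff_continuous)
  then have "continuous_map weakstar_top euclidean
      (g \<circ> (\<lambda>X t. blinfun_apply (X (fst t) (fst (snd t))) (snd (snd t))))"
    unfolding weakstar_top_def by blast
  moreover have "g \<circ> (\<lambda>X t. blinfun_apply (X (fst t) (fst (snd t))) (snd (snd t))) = nc_eval \<xi> n"
    by (auto simp: g_def nc_eval_def fun_eq_iff)
  ultimately show ?thesis by simp
qed

lemma nc_eval_in_ncA:
  assumes K: "real_compact_nc_convex K"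
  shows "nc_eval \<xi> \<in> ncA K"
proof -
  have mconj: "nc_eval \<xi> m (mconj m n \<alpha> x) = mconj m n \<alpha> (nc_eval \<xi> n x)" for m n \<alpha> x
    by (simp add: nc_eval_def mconj_def blinfun.sum_left blinfun.scaleR_left fun_eq_iff)
  have msum: "nc_eval \<xi> n (msum p M) = msum p (\<lambda>i. nc_eval \<xi> n (M i))" for n p M
    by (simp add: nc_eval_def msum_def blinfun.sum_left fun_eq_iff)
  show ?thesis
    unfolding ncA_def
  proof (intro CollectI conjI allI impI ballI)
    show "nc_eval \<xi> n x \<in> mat_sz n n" if "1 \<le> n" "x \<in> K n" for n x
      using nc_convex_mat_sz[OF K that] by (simp add: nc_eval_def mat_sz_def)
    show "continuous_map (subtopology weakstar_top (K n)) euclidean (nc_eval \<xi> n)" for n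
      by (rule continuous_map_from_subtopology[OF continuous_map_nc_eval])
  qed (simp_all add: mconj msum)
qed

lemma symmetric_if_trivial_involution:
  assumes K: "real_compact_nc_convex K" and trivial: "ncA_trivial_involution K"
  shows "symmetric_nc K"
  unfolding symmetric_nc_def
proof (intro allI impI ballI ext blinfun_eqI)
  fix n k i j \<xi> assume "1 \<le> n" "k \<in> K n"
  then have "ncA_star (nc_eval \<xi>) n k i j = nc_eval \<xi> n k i j"
    using trivial nc_eval_in_ncA[OF K] unfolding ncA_trivial_involution_def by simp
  then show "blinfun_apply (mtr k i j) \<xi> = blinfun_apply (k i j) \<xi>"
    by (simp add: ncA_star_def mtr_def nc_eval_def)
qed

theorem corollary4p3:
  shows "(\<forall>K :: nat \<Rightarrow> ('f::banach) emat set. real_compact_nc_convex K \<longrightarrow>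
            (ncA_trivial_involution K \<longleftrightarrow> symmetric_nc K))
       \<and> (\<forall>(s :: 'v::real_vector \<Rightarrow> 'v) C e. real_operator_system s C e \<longrightarrow>
            ((\<forall>v. s v = v) \<longleftrightarrow>
             (\<forall>n\<ge>1. \<forall>\<phi>. ucp s C e n \<phi> \<longrightarrow> (\<forall>v. mtr (\<phi> v) = \<phi> v))))"
proof (intro conjI allI impI)
  fix K :: "nat \<Rightarrow> ('f::banach) emat set"
  assume K: "real_compact_nc_convex K"
  show "ncA_trivial_involution K \<longleftrightarrow> symmetric_nc K"
    using symmetric_if_trivial_involution[OF K] ncA_symmetric[OF K]
    unfolding ncA_trivial_involution_def ncA_star_def by blast
next
  fix s :: "'v \<Rightarrow> 'v" and C e
  assume "real_operator_system s C e"
  then interpret real_opsys s C e by unfold_locales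
  show "(\<forall>v. s v = v) \<longleftrightarrow> (\<forall>n\<ge>1. \<forall>\<phi>. ucp s C e n \<phi> \<longrightarrow> (\<forall>v. mtr (\<phi> v) = \<phi> v))"
    using ucp_symmetric_if_trivial_involution trivial_involution_if_ucp_symmetric by blast
qed

end
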